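(* Let $T(t)$ and $S(t)$ be strongly continuous semigroups on Banach spaces $X$ and $Y$, respectively, and assume that $T(t)$ satisfies the recurrent hypercyclicity criterion. Let $\alpha$ be a uniform crossnorm on the algebraic tensor product $X\otimes Y$, and let $X\tilde{\otimes}_\alpha Y$ denote the completion of $(X\otimes Y,\alpha)$. (a) If $S(t)$ satisfies the hypercyclicity criterion, then the semigroup $T(t)\otimes S(t)$ on $X\tilde{\otimes}_\alpha Y$ satisfies the hypercyclicity criterion. (b) If $S(t)$ satisfies the recurrent hypercyclicity criterion, then the semigroup $T(t)\otimes S(t)$ on $X\tilde{\otimes}_\alpha Y$ satisfies the recurrent hypercyclicity criterion.
   Context: A uniform crossnorm on $X\otimes Y$ is a reasonable crossnorm $\alpha$ (in particular $\alpha(x\otimes y)=\|x\|_X\|y\|_Y$ for $x\in X,y\in Y$) such that for all bounded operators $A$ on $X$ and $B$ on $Y$ the operator $A\otimes B$ is bounded on $(X\otimes Y,\alpha)$ with norm at most $\|A\|\|B\|$. The operator $T(t)\otimes S(t)$ is defined on elementary tensors by $x\otimes y\mapsto T(t)x\otimes S(t)y$ and extended uniquely by continuity to $X\tilde{\otimes}_\alpha Y$; this gives a strongly continuous semigroup. A strongly continuous semigroup $R(t)$ on a (separable) Banach space $Z$ satisfies the hypercyclicity criterion if for all non-empty open subsets $U,V,W\subset Z$ with $0\in W$ there exists $t>0$ with $R(t)U\cap W\neq\emptyset$ and $R(t)W\cap V\neq\emptyset$. It satisfies the recurrent hypercyclicity criterion if for all non-empty open subsets $U,V,W\subset Z$ with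 $0\in W$ there exists a constant $L\geq 0$ such that every interval $[t,t+L]$ ($t\ge 0$) contains some $s$ with $R(s)U\cap W\neq\emptyset$ and $R(s)W\cap V\neq\emptyset$. *)

theory Defs
  imports "HOL-Analysis.Analysis"
begin

definition strongly_continuous_semigroup :: "(real \<Rightarrow> 'a::banach \<Rightarrow> 'a) \<Rightarrow> bool" where
  "strongly_continuous_semigroup T \<longleftrightarrow>
     (\<forall>t\<ge>0. bounded_linear (T t)) \<and>
     T 0 = id \<and>
     (\<forall>s\<ge>0. \<forall>t\<ge>0. T (s + t) = T s \<circ> T t) \<and>
     (\<forall>x. continuous_on {0..} (\<lambda>t. T t x))"

definition hypercyclicity_criterion :: "(real \<Rightarrow> 'a::banach \<Rightarrow> 'a) \<Rightarrow> bool" where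
  "hypercyclicity_criterion R \<longleftrightarrow>
     (\<forall>U V W. open U \<and> U \<noteq> {} \<and> open V \<and> V \<noteq> {} \<and> open W \<and> 0 \<in> W \<longrightarrow>
        (\<exists>t>0. R t ` U \<inter> W \<noteq> {} \<and> R t ` W \<inter> V \<noteq> {}))"

definition recurrent_hypercyclicity_criterion :: "(real \<Rightarrow> 'a::banach \<Rightarrow> 'a) \<Rightarrow> bool" where
  "recurrent_hypercyclicity_criterion R \<longleftrightarrow>
     (\<forall>U V W. open U \<and> U \<noteq> {} \<and> open V \<and> V \<noteq> {} \<and> open W \<and> 0 \<in> W \<longrightarrow>
        (\<exists>L\<ge>0. \<forall>t\<ge>0. \<exists>s\<in>{t..t+L}. R s ` U \<inter> W \<noteq> {} \<and> R s ` W \<inter> V \<noteq> {}))"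

text \<open>\<open>tensor_completion tp\<close>: the Banach space 'c, together with the bilinear map tp,
  is (isometrically) the completion of the algebraic tensor product of 'a and 'b
  with respect to a uniform (reasonable) crossnorm.  Precisely:
  tp is bilinear; the canonical linear map from the algebraic tensor product is injective
  (no nontrivial relation \<open>\<Sum> tp x_i y_i = 0\<close> beyond those of the algebraic tensor product,
  tested by products f \<otimes> g of linear functionals, which separate the algebraic tensor product);
  the span of elementary tensors is dense; the norm is a crossnorm; its dual norm is
  a crossnorm on bounded functionals (reasonable); and it is uniform.\<close>
definition tensor_completion :: "('a::banach \<Rightarrow> 'b::banach \<Rightarrow> 'c::banach) \<Rightarrow> bool" where
  "tensor_completion tp \<longleftrightarrow>
     (\<forall>x. linear (tp x)) \<and> (\<forall>y. linear (\<lambda>x. tp x y)) \<and>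
     (\<forall>n (x::nat \<Rightarrow> 'a) (y::nat \<Rightarrow> 'b) (f::'a \<Rightarrow> real) (g::'b \<Rightarrow> real).
        linear f \<and> linear g \<and> (\<Sum>i<n. tp (x i) (y i)) = 0 \<longrightarrow> (\<Sum>i<n. f (x i) * g (y i)) = 0) \<and>
     closure (span (range (case_prod tp))) = UNIV \<and>
     (\<forall>x y. norm (tp x y) = norm x * norm y) \<and>
     (\<forall>n (x::nat \<Rightarrow> 'a) (y::nat \<Rightarrow> 'b) (f::'a \<Rightarrow> real) (g::'b \<Rightarrow> real).
        bounded_linear f \<and> bounded_linear g \<longrightarrow>
        \<bar>\<Sum>i<n. f (x i) * g (y i)\<bar> \<le> onorm f * onorm g * norm (\<Sum>i<n. tp (x i) (y i))) \<and>
     (\<forall>n (x::nat \<Rightarrow> 'a) (y::nat \<Rightarrow> 'b) (A::'a \<Rightarrow> 'a) (B::'b \<Rightarrow> 'b).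
        bounded_linear A \<and> bounded_linear B \<longrightarrow>
        norm (\<Sum>i<n. tp (A (x i)) (B (y i))) \<le> onorm A * onorm B * norm (\<Sum>i<n. tp (x i) (y i)))"

end

theory Submission
  imports Defs
begin

text \<open>Approximate points of \<open>U\<close> and \<open>V\<close> by finite sums \<open>\<Sum> x\<^sub>i \<otimes> y\<^sub>i\<close> and \<open>\<Sum> a\<^sub>j \<otimes> b\<^sub>j\<close> of
  elementary tensors.  Since \<open>\<parallel>x \<otimes> y\<parallel> = \<parallel>x\<parallel> \<parallel>y\<parallel>\<close>, the criterion for \<open>T(s) \<otimes> S(s)\<close> at \<open>(U, V, W)\<close>
  holds as soon as \<open>T(s)\<close> and \<open>S(s)\<close> each satisfy the criterion simultaneously for the finitely
  many small balls around the \<open>x\<^sub>i, a\<^sub>j\<close> resp. \<open>y\<^sub>i, b\<^sub>j\<close>.  For one semigroup, finitely many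
  such conditions are forced by a single instance of the criterion, because the operators of the
  semigroup commute; by the recurrent criterion for \<open>T\<close>, the good times for \<open>T\<close> are therefore
  syndetic, with gaps at most some \<open>L\<close>.
  Using the uniform bound on \<open>[0, L]\<close> and the dense range of every \<open>S(r)\<close>, the conditions for
  \<open>S\<close> can be strengthened so that they persist on a whole interval \<open>[s, s + L]\<close>, which then
  contains a good time for \<open>T\<close>.\<close>

section \<open>Strongly continuous semigroups\<close>

lemma sc_semigroup_bounded_linear:
  "strongly_continuous_semigroup P \<Longrightarrow> t \<ge> 0 \<Longrightarrow> bounded_linear (P t)"
  by (simp add: strongly_continuous_semigroup_def)

lemma sc_semigroup_linear: "strongly_continuous_semigroup P \<Longrightarrow> t \<ge> 0 \<Longrightarrow> linear (P t)"
  using sc_semigroup_bounded_linear bounded_linear.linear by blast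

lemma sc_semigroup_orbit_continuous:
  "strongly_continuous_semigroup P \<Longrightarrow> continuous_on {0..} (\<lambda>t. P t x)"
  by (simp add: strongly_continuous_semigroup_def)

lemma sc_semigroup_add:
  "strongly_continuous_semigroup P \<Longrightarrow> s \<ge> 0 \<Longrightarrow> t \<ge> 0 \<Longrightarrow> P (s + t) x = P s (P t x)"
  by (simp add: strongly_continuous_semigroup_def)

lemma sc_semigroup_commute:
  "strongly_continuous_semigroup P \<Longrightarrow> s \<ge> 0 \<Longrightarrow> t \<ge> 0 \<Longrightarrow> P s (P t x) = P t (P s x)"
  by (metis sc_semigroup_add add.commute)

lemma linear_bounded_by_bound_on_ball:
  fixes f :: "'a::real_normed_vector \<Rightarrow> 'b::real_normed_vector"
  assumes "linear f" "\<rho> > 0" and bound: "\<forall>z\<in>ball x0 \<rho>. norm (f z) \<le> c"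
  shows "norm (f x) \<le> (4 * c / \<rho>) * norm x"
proof (cases "x = 0")
  case True
  then show ?thesis using \<open>linear f\<close> by (simp add: linear_0)
next
  case False
  define z where "z = (\<rho> / (2 * norm x)) *\<^sub>R x"
  have "norm z = \<rho> / 2" using False \<open>\<rho> > 0\<close> by (simp add: z_def)
  then have "x0 + z \<in> ball x0 \<rho>" "x0 \<in> ball x0 \<rho>" using \<open>\<rho> > 0\<close> by (auto simp: dist_norm)
  then have "norm (f (x0 + z)) \<le> c" "norm (f x0) \<le> c" using bound by blast+
  moreover have "f z = f (x0 + z) - f x0" using \<open>linear f\<close> by (simp add: linear_add)
  ultimately have fz: "norm (f z) \<le> 2 * c" using norm_triangle_ineq4[of "f (x0 + z)" "f x0"] by simp
  have "x = (2 * norm x / \<rho>) *\<^sub>R z" using False \<open>\<rho> > 0\<close> by (simp add: z_def)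
  then have "norm (f x) = (2 * norm x / \<rho>) * norm (f z)"
    using \<open>linear f\<close> \<open>\<rho> > 0\<close>
    by (metis linear_scale norm_scaleR abs_of_nonneg divide_nonneg_pos norm_ge_zero zero_le_numeral)
  also have "\<dots> \<le> (2 * norm x / \<rho>) * (2 * c)" using fz \<open>\<rho> > 0\<close> by (intro mult_left_mono) auto
  finally show ?thesis by (simp add: field_simps)
qed

lemma uniform_boundedness:
  fixes f :: "'i \<Rightarrow> 'a::banach \<Rightarrow> 'b::real_normed_vector"
  assumes lin: "\<And>i. i \<in> I \<Longrightarrow> bounded_linear (f i)"
    and pointwise: "\<And>x. \<exists>c. \<forall>i\<in>I. norm (f i x) \<le> c"
  shows "\<exists>M>0. \<forall>i\<in>I. \<forall>x. norm (f i x) \<le> M * norm x"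
proof -
  define E where "E n = (\<Inter>i\<in>I. {x. norm (f i x) \<le> real n})" for n :: nat
  have "closed (E n)" for n
    unfolding E_def
  proof (intro closed_INT ballI closed_Collect_le continuous_on_norm continuous_on_const)
    show "continuous_on UNIV (f i)" if "i \<in> I" for i
      using lin[OF that] by (simp add: linear_continuous_on)
  qed
  moreover have "\<Union>(range E) = UNIV"
  proof (intro set_eqI iffI UNIV_I)
    fix x
    obtain c where "\<forall>i\<in>I. norm (f i x) \<le> c" using pointwise by blast
    then have "x \<in> E (nat \<lceil>c\<rceil>)"
      unfolding E_def by (auto intro: order_trans[OF _ real_nat_ceiling_ge])
    then show "x \<in> \<Union>(range E)" by blast
  qed
  ultimately obtain n where "interior (E n) \<noteq> {}"
    using Baire_category_alt[of euclidean "range E"]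
    by (auto simp: completely_metrizable_space_euclidean)
  then obtain x0 \<rho> where "\<rho> > 0" "ball x0 \<rho> \<subseteq> E n"
    by (metis all_not_in_conv open_contains_ball open_interior interior_subset subset_trans)
  have bound: "norm (f i x) \<le> (4 * real n / \<rho>) * norm x" if "i \<in> I" for i x
  proof (rule linear_bounded_by_bound_on_ball)
    show "linear (f i)" using lin[OF that] by (rule bounded_linear.linear)
    show "\<forall>z\<in>ball x0 \<rho>. norm (f i z) \<le> real n"
      using \<open>ball x0 \<rho> \<subseteq> E n\<close> that unfolding E_def by blast
  qed fact
  have "norm (f i x) \<le> (4 * real n / \<rho> + 1) * norm x" if "i \<in> I" for i x
  proof -
    have "(4 * real n / \<rho>) * norm x \<le> (4 * real n / \<rho> + 1) * norm x" by (intro mult_right_mono) simp_all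
    then show ?thesis using bound[OF that, of x] by linarith
  qed
  moreover have "4 * real n / \<rho> + 1 > 0" using \<open>\<rho> > 0\<close> by (simp add: add_nonneg_pos)
  ultimately show ?thesis by blast
qed

lemma sc_semigroup_uniformly_bounded:
  assumes "strongly_continuous_semigroup P" "L \<ge> 0"
  shows "\<exists>M>0. \<forall>r\<in>{0..L}. \<forall>x. norm (P r x) \<le> M * norm x"
proof (rule uniform_boundedness)
  show "bounded_linear (P r)" if "r \<in> {0..L}" for r
    using that sc_semigroup_bounded_linear[OF assms(1)] by simp
  fix x
  have "continuous_on {0..L} (\<lambda>t. P t x)"
    using sc_semigroup_orbit_continuous[OF assms(1)] by (rule continuous_on_subset) auto
  then have "bounded ((\<lambda>t. P t x) ` {0..L})"
    by (intro compact_imp_bounded compact_continuous_image) auto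
  then show "\<exists>c. \<forall>r\<in>{0..L}. norm (P r x) \<le> c" by (auto simp: bounded_iff)
qed

section \<open>Finitely many instances of the criterion at once\<close>

definition hc_at :: "(real \<Rightarrow> 'a::real_normed_vector \<Rightarrow> 'a) \<Rightarrow> 'a set \<Rightarrow> 'a set \<Rightarrow> 'a set \<Rightarrow> real \<Rightarrow> bool"
  where "hc_at P U V W s \<longleftrightarrow> P s ` U \<inter> W \<noteq> {} \<and> P s ` W \<inter> V \<noteq> {}"

definition open_family :: "'a::topological_space set set \<Rightarrow> bool"
  where "open_family A \<longleftrightarrow> finite A \<and> (\<forall>G\<in>A. open G \<and> G \<noteq> {})"

definition hc_family_at ::
    "(real \<Rightarrow> 'a::real_normed_vector \<Rightarrow> 'a) \<Rightarrow> real \<Rightarrow> 'a set set \<Rightarrow> 'a set set \<Rightarrow> real \<Rightarrow> bool"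
  where "hc_family_at P \<delta> A B s \<longleftrightarrow>
    (\<forall>G\<in>A. \<exists>x\<in>G. norm (P s x) < \<delta>) \<and> (\<forall>G\<in>B. \<exists>w. norm w < \<delta> \<and> P s w \<in> G)"

lemma hypercyclicity_criterionD:
  "hypercyclicity_criterion P \<Longrightarrow> open U \<Longrightarrow> U \<noteq> {} \<Longrightarrow> open V \<Longrightarrow> V \<noteq> {} \<Longrightarrow> open W \<Longrightarrow> 0 \<in> W
    \<Longrightarrow> \<exists>t>0. hc_at P U V W t"
  unfolding hypercyclicity_criterion_def hc_at_def by blast

lemma recurrent_hypercyclicity_criterionD:
  "recurrent_hypercyclicity_criterion P \<Longrightarrow> open U \<Longrightarrow> U \<noteq> {} \<Longrightarrow> open V \<Longrightarrow> V \<noteq> {} \<Longrightarrow>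
    open W \<Longrightarrow> 0 \<in> W \<Longrightarrow> \<exists>L\<ge>0. \<forall>t\<ge>0. \<exists>s\<in>{t..t+L}. hc_at P U V W s"
  unfolding recurrent_hypercyclicity_criterion_def hc_at_def by blast

lemma recurrent_imp_hypercyclicity_criterion:
  assumes "recurrent_hypercyclicity_criterion P"
  shows "hypercyclicity_criterion P"
  unfolding hypercyclicity_criterion_def
proof (intro allI impI)
  fix U V W :: "'a set"
  assume "open U \<and> U \<noteq> {} \<and> open V \<and> V \<noteq> {} \<and> open W \<and> 0 \<in> W"
  then obtain L where "\<forall>t\<ge>0. \<exists>s\<in>{t..t+L}. hc_at P U V W s"
    using recurrent_hypercyclicity_criterionD[OF assms] by blast
  then obtain s where "s \<in> {1..1+L}" "hc_at P U V W s" by (meson zero_le_one)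
  then show "\<exists>t>0. P t ` U \<inter> W \<noteq> {} \<and> P t ` W \<inter> V \<noteq> {}"
    unfolding hc_at_def by (intro exI[of _ s]) simp
qed

lemma hypercyclicity_criterion_transitive:
  assumes sg: "strongly_continuous_semigroup P" and hc: "hypercyclicity_criterion P"
    and "open U" "U \<noteq> {}" "open V" "V \<noteq> {}"
  shows "\<exists>k\<ge>0. \<exists>x\<in>U. P k x \<in> V"
proof -
  obtain p e1 where p: "e1 > 0" "ball p e1 \<subseteq> U"
    using \<open>open U\<close> \<open>U \<noteq> {}\<close> openE by (metis all_not_in_conv)
  obtain q e2 where q: "e2 > 0" "ball q e2 \<subseteq> V"
    using \<open>open V\<close> \<open>V \<noteq> {}\<close> openE by (metis all_not_in_conv)
  define e where "e = min e1 e2 / 2"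
  have "e > 0" using p q by (simp add: e_def)
  then obtain t where "t > 0" "hc_at P (ball p e) (ball q e) (ball 0 e) t"
    using hypercyclicity_criterionD[OF hc] by (metis open_ball centre_in_ball ball_eq_empty not_le)
  then obtain u w where u: "dist p u < e" "norm (P t u) < e" and w: "norm w < e" "dist q (P t w) < e"
    unfolding hc_at_def by auto
  txt \<open>\<open>u\<close> moves \<open>p\<close> towards \<open>0\<close> and \<open>w\<close> moves \<open>0\<close> towards \<open>q\<close>, so \<open>u + w\<close> moves \<open>p\<close> towards \<open>q\<close>.\<close>
  have "P t (u + w) = P t u + P t w" using sc_semigroup_linear[OF sg] \<open>t > 0\<close> by (simp add: linear_add)
  then have "dist q (P t (u + w)) < e2"
    using u(2) w(2) norm_triangle_ineq[of "q - P t w" "- P t u"] unfolding e_def dist_norm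
    by (simp add: algebra_simps)
  moreover have "dist p (u + w) < e1"
    using u(1) w(1) norm_triangle_ineq[of "p - u" "- w"] unfolding e_def dist_norm
    by (simp add: algebra_simps)
  ultimately have "u + w \<in> U" "P t (u + w) \<in> V" using p q by auto
  then show ?thesis using \<open>t > 0\<close> by (intro exI[of _ t]) auto
qed

definition controlled_by_triple ::
    "(real \<Rightarrow> 'a::real_normed_vector \<Rightarrow> 'a) \<Rightarrow> real \<Rightarrow> 'a set set \<Rightarrow> 'a set set \<Rightarrow> bool"
  where "controlled_by_triple P \<delta> A B \<longleftrightarrow> (\<exists>U V W. open U \<and> U \<noteq> {} \<and> open V \<and> V \<noteq> {} \<and>
    open W \<and> 0 \<in> W \<and> (\<forall>s\<ge>0. hc_at P U V W s \<longrightarrow> hc_family_at P \<delta> A B s))"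

lemma controlled_by_triple_empty: "controlled_by_triple P \<delta> {} {}"
  unfolding controlled_by_triple_def hc_family_at_def by (intro exI[of _ UNIV]) auto

text \<open>Both insertion steps first move \<open>G\<close> by some \<open>P k\<close> to meet \<open>U\<close> (resp. \<open>V\<close>), then shrink the
  triple so that the criterion at time \<open>s\<close> yields the new condition; commutativity of
  \<open>P s\<close> and \<open>P k\<close> transports it back to \<open>G\<close>.\<close>
lemma controlled_by_triple_insert_left:
  assumes sg: "strongly_continuous_semigroup P" and hc: "hypercyclicity_criterion P" and "\<delta> > 0"
    and ctrl: "controlled_by_triple P \<delta> A B" and G: "open G" "G \<noteq> {}"
  shows "controlled_by_triple P \<delta> (insert G A) B"
proof -
  obtain U V W where UVW: "open U" "U \<noteq> {}" "open V" "V \<noteq> {}" "open W" "0 \<in> W"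
    and old: "\<forall>s\<ge>0. hc_at P U V W s \<longrightarrow> hc_family_at P \<delta> A B s"
    using ctrl unfolding controlled_by_triple_def by blast
  obtain k x where k: "k \<ge> 0" "x \<in> U" "P k x \<in> G"
    using hypercyclicity_criterion_transitive[OF sg hc UVW(1,2) G] by blast
  have cont: "continuous_on UNIV (P k)"
    using sc_semigroup_bounded_linear[OF sg k(1)] by (simp add: linear_continuous_on)
  define U' where "U' = U \<inter> P k -` G"
  define W' where "W' = W \<inter> P k -` ball 0 \<delta>"
  have "open U'" "open W'" unfolding U'_def W'_def using UVW G cont by (auto intro: open_vimage)
  moreover have "U' \<noteq> {}" using k unfolding U'_def by blast
  moreover have "0 \<in> W'"
    using UVW \<open>\<delta> > 0\<close> sc_semigroup_linear[OF sg k(1)] unfolding W'_def by (simp add: linear_0)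
  moreover have "hc_family_at P \<delta> (insert G A) B s" if s: "s \<ge> 0" and hit: "hc_at P U' V W' s" for s
  proof -
    have "hc_at P U V W s" using hit unfolding hc_at_def U'_def W'_def by blast
    then have "hc_family_at P \<delta> A B s" using old s by blast
    moreover obtain c where "c \<in> U'" "P s c \<in> W'" using hit unfolding hc_at_def by blast
    then have "P k c \<in> G" "norm (P s (P k c)) < \<delta>"
      using sc_semigroup_commute[OF sg s k(1)] unfolding U'_def W'_def by auto
    ultimately show ?thesis unfolding hc_family_at_def by blast
  qed
  ultimately show ?thesis unfolding controlled_by_triple_def using UVW by blast
qed

lemma controlled_by_triple_insert_right:
  assumes sg: "strongly_continuous_semigroup P" and hc: "hypercyclicity_criterion P" and "\<delta> > 0"
    and ctrl: "controlled_by_triple P \<delta> A B" and G: "open G" "G \<noteq> {}"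
  shows "controlled_by_triple P \<delta> A (insert G B)"
proof -
  obtain U V W where UVW: "open U" "U \<noteq> {}" "open V" "V \<noteq> {}" "open W" "0 \<in> W"
    and old: "\<forall>s\<ge>0. hc_at P U V W s \<longrightarrow> hc_family_at P \<delta> A B s"
    using ctrl unfolding controlled_by_triple_def by blast
  obtain k x where k: "k \<ge> 0" "x \<in> V" "P k x \<in> G"
    using hypercyclicity_criterion_transitive[OF sg hc UVW(3,4) G] by blast
  have cont: "continuous_on UNIV (P k)"
    using sc_semigroup_bounded_linear[OF sg k(1)] by (simp add: linear_continuous_on)
  define V' where "V' = V \<inter> P k -` G"
  define W' where "W' = W \<inter> P k -` ball 0 \<delta>"
  have "open V'" "open W'" unfolding V'_def W'_def using UVW G cont by (auto intro: open_vimage)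
  moreover have "V' \<noteq> {}" using k unfolding V'_def by blast
  moreover have "0 \<in> W'"
    using UVW \<open>\<delta> > 0\<close> sc_semigroup_linear[OF sg k(1)] unfolding W'_def by (simp add: linear_0)
  moreover have "hc_family_at P \<delta> A (insert G B) s" if s: "s \<ge> 0" and hit: "hc_at P U V' W' s" for s
  proof -
    have "hc_at P U V W s" using hit unfolding hc_at_def V'_def W'_def by blast
    then have "hc_family_at P \<delta> A B s" using old s by blast
    moreover obtain w where "w \<in> W'" "P s w \<in> V'" using hit unfolding hc_at_def by blast
    then have "norm (P k w) < \<delta>" "P s (P k w) \<in> G"
      using sc_semigroup_commute[OF sg s k(1)] unfolding V'_def W'_def by auto
    ultimately show ?thesis unfolding hc_family_at_def by blast
  qed
  ultimately show ?thesis unfolding controlled_by_triple_def using UVW by blast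
qed

lemma controlled_by_triple_open_family:
  assumes sg: "strongly_continuous_semigroup P" and hc: "hypercyclicity_criterion P" and "\<delta> > 0"
    and A: "open_family A" and B: "open_family B"
  shows "controlled_by_triple P \<delta> A B"
proof -
  have "finite B" "\<forall>G\<in>B. open G \<and> G \<noteq> {}" using B by (simp_all add: open_family_def)
  then have empty_left: "controlled_by_triple P \<delta> {} B"
    by (induction B rule: finite_induct)
      (auto intro: controlled_by_triple_empty controlled_by_triple_insert_right[OF sg hc \<open>\<delta> > 0\<close>])
  have "finite A" "\<forall>G\<in>A. open G \<and> G \<noteq> {}" using A by (simp_all add: open_family_def)
  then show ?thesis
    by (induction A rule: finite_induct)
      (auto intro: empty_left controlled_by_triple_insert_left[OF sg hc \<open>\<delta> > 0\<close>])
qed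

lemma hc_family_at_exists:
  assumes sg: "strongly_continuous_semigroup P" and hc: "hypercyclicity_criterion P" and "\<delta> > 0"
    and "open_family A" "open_family B"
  shows "\<exists>s>0. hc_family_at P \<delta> A B s"
proof -
  obtain U V W where "open U" "U \<noteq> {}" "open V" "V \<noteq> {}" "open W" "0 \<in> W"
    and "\<forall>s\<ge>0. hc_at P U V W s \<longrightarrow> hc_family_at P \<delta> A B s"
    using controlled_by_triple_open_family[OF assms] unfolding controlled_by_triple_def by blast
  then show ?thesis using hypercyclicity_criterionD[OF hc] by (meson less_imp_le)
qed

lemma hc_family_at_syndetic:
  assumes sg: "strongly_continuous_semigroup P" and rhc: "recurrent_hypercyclicity_criterion P"
    and "\<delta> > 0" "open_family A" "open_family B"
  shows "\<exists>L\<ge>0. \<forall>t\<ge>0. \<exists>s\<in>{t..t+L}. hc_family_at P \<delta> A B s"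
proof -
  obtain U V W where "open U" "U \<noteq> {}" "open V" "V \<noteq> {}" "open W" "0 \<in> W"
    and ctrl: "\<forall>s\<ge>0. hc_at P U V W s \<longrightarrow> hc_family_at P \<delta> A B s"
    using controlled_by_triple_open_family[OF sg recurrent_imp_hypercyclicity_criterion[OF rhc]
        assms(3-5)]
    unfolding controlled_by_triple_def by blast
  then obtain L where "L \<ge> 0" "\<forall>t\<ge>0. \<exists>s\<in>{t..t+L}. hc_at P U V W s"
    using recurrent_hypercyclicity_criterionD[OF rhc] by blast
  moreover have "s \<in> {t..t+L} \<Longrightarrow> t \<ge> 0 \<Longrightarrow> s \<ge> 0" for s t by simp
  ultimately show ?thesis using ctrl by meson
qed

section \<open>Persistence on bounded time intervals\<close>

text \<open>A vector \<open>P t w\<close> with \<open>w\<close> small and \<open>P t w\<close> far from \<open>0\<close> forces \<open>t > r\<close> by the uniform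
  bound on \<open>[0, r]\<close>, and then \<open>P t w\<close> lies in the range of \<open>P r\<close>.\<close>
lemma hypercyclicity_criterion_dense_range:
  assumes sg: "strongly_continuous_semigroup P" and hc: "hypercyclicity_criterion P"
    and "r \<ge> 0" "open G" "G \<noteq> {}"
  shows "\<exists>x. P r x \<in> G"
proof (cases "G \<subseteq> {0}")
  case True
  then have "0 \<in> G" using \<open>G \<noteq> {}\<close> by blast
  moreover have "P r 0 = 0" using sc_semigroup_linear[OF sg \<open>r \<ge> 0\<close>] by (rule linear_0)
  ultimately show ?thesis by metis
next
  case False
  then obtain g where "g \<in> G" "g \<noteq> 0" by blast
  obtain M where M: "M > 0" "\<forall>t\<in>{0..r}. \<forall>x. norm (P t x) \<le> M * norm x"
    using sc_semigroup_uniformly_bounded[OF sg \<open>r \<ge> 0\<close>] by blast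
  define \<eta> where "\<eta> = norm g / 2"
  have "\<eta> > 0" using \<open>g \<noteq> 0\<close> by (simp add: \<eta>_def)
  have "open (G - cball 0 \<eta>)" "g \<in> G - cball 0 \<eta>"
    using \<open>open G\<close> \<open>g \<in> G\<close> \<open>g \<noteq> 0\<close> by (auto simp: \<eta>_def)
  then obtain t where "t > 0" "hc_at P UNIV (G - cball 0 \<eta>) (ball 0 (\<eta> / M)) t"
    using hypercyclicity_criterionD[OF hc] \<open>\<eta> > 0\<close> \<open>M > 0\<close> by (metis open_UNIV UNIV_not_empty
        open_ball centre_in_ball divide_pos_pos empty_iff)
  then obtain w where w: "norm w < \<eta> / M" "P t w \<in> G" "norm (P t w) > \<eta>"
    unfolding hc_at_def by (auto simp: not_le)
  have "t > r"
  proof (rule ccontr)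
    assume "\<not> t > r"
    then have "norm (P t w) \<le> M * norm w" using M(2) \<open>t > 0\<close> by auto
    also have "\<dots> < \<eta>" using w(1) \<open>M > 0\<close> by (simp add: field_simps)
    finally show False using w(3) by simp
  qed
  then have "P t w = P r (P (t - r) w)" using sc_semigroup_add[OF sg, of r "t - r"] \<open>r \<ge> 0\<close> by simp
  then show ?thesis using w(2) by metis
qed

lemma sc_semigroup_maps_ball_into_open:
  assumes sg: "strongly_continuous_semigroup P"
    and M: "M > 0" "\<forall>r\<in>{0..L}. \<forall>x. norm (P r x) \<le> M * norm x"
    and "open G" "P r0 z \<in> G" "r0 \<ge> 0"
  shows "\<exists>d>0. \<exists>\<rho>>0. \<forall>r\<in>{0..L}. dist r r0 < d \<longrightarrow> P r ` ball z \<rho> \<subseteq> G"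
proof -
  obtain \<eta> where \<eta>: "\<eta> > 0" "ball (P r0 z) \<eta> \<subseteq> G" using \<open>open G\<close> \<open>P r0 z \<in> G\<close> openE by metis
  obtain d where d: "d > 0" "\<forall>r\<in>{0..}. dist r r0 < d \<longrightarrow> dist (P r z) (P r0 z) < \<eta> / 2"
    using sc_semigroup_orbit_continuous[OF sg, of z] \<open>r0 \<ge> 0\<close> \<eta>(1)
    unfolding continuous_on_iff by (metis atLeast_iff half_gt_zero)
  have "P r a \<in> G" if r: "r \<in> {0..L}" "dist r r0 < d" and a: "a \<in> ball z (\<eta> / (2 * M))" for r a
  proof -
    have "P r a - P r0 z = P r (a - z) + (P r z - P r0 z)"
      using sc_semigroup_linear[OF sg] r(1) by (simp add: linear_diff)
    then have "dist (P r a) (P r0 z) \<le> norm (P r (a - z)) + dist (P r z) (P r0 z)"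
      by (metis dist_norm norm_triangle_ineq)
    also have "norm (P r (a - z)) \<le> M * norm (a - z)" using M(2) r(1) by blast
    also have "M * norm (a - z) < \<eta> / 2"
      using a M(1) by (simp add: dist_norm norm_minus_commute field_simps)
    also have "dist (P r z) (P r0 z) < \<eta> / 2" using d(2) r by auto
    finally show ?thesis using \<eta>(2) by (auto simp: dist_commute)
  qed
  then show ?thesis using d(1) \<eta>(1) M(1)
    by (intro exI[of _ d] conjI exI[of _ "\<eta> / (2 * M)"]) auto
qed

lemma hypercyclicity_criterion_finite_preimage_cover:
  assumes sg: "strongly_continuous_semigroup P" and hc: "hypercyclicity_criterion P"
    and "L \<ge> 0" "open G" "G \<noteq> {}"
  shows "\<exists>F. open_family F \<and> (\<forall>r\<in>{0..L}. \<exists>B\<in>F. P r ` B \<subseteq> G)"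
proof -
  obtain M where M: "M > 0" "\<forall>r\<in>{0..L}. \<forall>x. norm (P r x) \<le> M * norm x"
    using sc_semigroup_uniformly_bounded[OF sg \<open>L \<ge> 0\<close>] by blast
  have "\<exists>d>0. \<exists>\<rho>>0. \<exists>z. \<forall>r\<in>{0..L}. dist r r0 < d \<longrightarrow> P r ` ball z \<rho> \<subseteq> G"
    if "r0 \<in> {0..L}" for r0
    using that hypercyclicity_criterion_dense_range[OF sg hc _ \<open>open G\<close> \<open>G \<noteq> {}\<close>]
      sc_semigroup_maps_ball_into_open[OF sg M \<open>open G\<close>] by fastforce
  then obtain d \<rho> z where dz: "\<And>r0. r0 \<in> {0..L} \<Longrightarrow> d r0 > 0 \<and> \<rho> r0 > 0 \<and>
      (\<forall>r\<in>{0..L}. dist r r0 < d r0 \<longrightarrow> P r ` ball (z r0) (\<rho> r0) \<subseteq> G)"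
    by metis
  have cover: "{0..L} \<subseteq> (\<Union>r0\<in>{0..L}. ball r0 (d r0))"
  proof
    fix r assume "r \<in> {0..L}"
    then show "r \<in> (\<Union>r0\<in>{0..L}. ball r0 (d r0))" using dz[of r] by (auto intro!: bexI[of _ r])
  qed
  obtain C where C: "C \<subseteq> {0..L}" "finite C" "{0..L} \<subseteq> (\<Union>r0\<in>C. ball r0 (d r0))"
    using compactE_image[OF compact_Icc _ cover] by blast
  have "open_family ((\<lambda>r0. ball (z r0) (\<rho> r0)) ` C)"
    using C(1,2) dz unfolding open_family_def by (fastforce simp: subset_iff)
  moreover have "\<exists>B\<in>(\<lambda>r0. ball (z r0) (\<rho> r0)) ` C. P r ` B \<subseteq> G" if r: "r \<in> {0..L}" for r
  proof -
    obtain r0 where "r0 \<in> C" "dist r0 r < d r0" using C(3) r by auto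
    moreover have "r0 \<in> {0..L}" using \<open>r0 \<in> C\<close> C(1) by blast
    ultimately have "P r ` ball (z r0) (\<rho> r0) \<subseteq> G" using dz r by (metis dist_commute)
    then show ?thesis using \<open>r0 \<in> C\<close> by blast
  qed
  ultimately show ?thesis by blast
qed

text \<open>Every \<open>G \<in> B\<close> is reached from one of finitely many open sets at each time in \<open>[0, L]\<close>,
  and smallness only grows by the uniform bound on \<open>[0, L]\<close>.\<close>
lemma hc_family_at_shift:
  assumes sg: "strongly_continuous_semigroup P" and hc: "hypercyclicity_criterion P"
    and "L \<ge> 0" "\<delta> > 0" and B: "open_family B"
  shows "\<exists>\<delta>' B'. \<delta>' > 0 \<and> open_family B' \<and>
    (\<forall>t\<ge>0. hc_family_at P \<delta>' A B' t \<longrightarrow> (\<forall>r\<in>{0..L}. hc_family_at P \<delta> A B (t + r)))"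
proof -
  obtain M where M: "M > 0" "\<forall>r\<in>{0..L}. \<forall>x. norm (P r x) \<le> M * norm x"
    using sc_semigroup_uniformly_bounded[OF sg \<open>L \<ge> 0\<close>] by blast
  obtain F where F: "\<And>G. G \<in> B \<Longrightarrow> open_family (F G) \<and> (\<forall>r\<in>{0..L}. \<exists>B0\<in>F G. P r ` B0 \<subseteq> G)"
    using hypercyclicity_criterion_finite_preimage_cover[OF sg hc \<open>L \<ge> 0\<close>] B
    unfolding open_family_def by metis
  define \<delta>' where "\<delta>' = \<delta> / (M + 1)"
  have "\<delta>' > 0" "\<delta>' \<le> \<delta>" "M * \<delta>' \<le> \<delta>"
    using \<open>\<delta> > 0\<close> M(1) by (auto simp: \<delta>'_def field_simps)
  have "open_family (\<Union>(F ` B))" using B F unfolding open_family_def by auto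
  moreover have "hc_family_at P \<delta> A B (t + r)"
    if t: "t \<ge> 0" and hit: "hc_family_at P \<delta>' A (\<Union>(F ` B)) t" and r: "r \<in> {0..L}" for t r
  proof -
    have shift: "P (t + r) x = P r (P t x)" for x
      using sc_semigroup_add[OF sg, of r t] t r by (simp add: add.commute)
    show ?thesis
      unfolding hc_family_at_def
    proof (intro conjI ballI)
      fix G assume "G \<in> A"
      then obtain x where "x \<in> G" "norm (P t x) < \<delta>'" using hit unfolding hc_family_at_def by blast
      have "norm (P r (P t x)) \<le> M * norm (P t x)" using M(2) r by blast
      moreover have "M * norm (P t x) < M * \<delta>'" using \<open>norm (P t x) < \<delta>'\<close> M(1) by simp
      ultimately have "norm (P r (P t x)) < \<delta>" using \<open>M * \<delta>' \<le> \<delta>\<close> by linarith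
      then show "\<exists>x\<in>G. norm (P (t + r) x) < \<delta>" using \<open>x \<in> G\<close> shift by auto
    next
      fix G assume "G \<in> B"
      then obtain B0 where "B0 \<in> F G" "P r ` B0 \<subseteq> G" using F r by blast
      moreover obtain w where "norm w < \<delta>'" "P t w \<in> B0"
        using hit \<open>G \<in> B\<close> \<open>B0 \<in> F G\<close> unfolding hc_family_at_def by blast
      ultimately show "\<exists>w. norm w < \<delta> \<and> P (t + r) w \<in> G" using \<open>\<delta>' \<le> \<delta>\<close> shift by force
    qed
  qed
  ultimately show ?thesis using \<open>\<delta>' > 0\<close> by blast
qed

lemma hc_family_on_interval:
  assumes sg: "strongly_continuous_semigroup P" and hc: "hypercyclicity_criterion P"
    and "L \<ge> 0" "\<delta> > 0" "open_family A" "open_family B"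
  shows "\<exists>s>0. \<forall>r\<in>{0..L}. hc_family_at P \<delta> A B (s + r)"
proof -
  obtain \<delta>' B' where "\<delta>' > 0" "open_family B'"
    and persist: "\<forall>t\<ge>0. hc_family_at P \<delta>' A B' t \<longrightarrow> (\<forall>r\<in>{0..L}. hc_family_at P \<delta> A B (t + r))"
    using hc_family_at_shift[OF sg hc assms(3,4,6)] by blast
  then obtain s where "s > 0" "hc_family_at P \<delta>' A B' s"
    using hc_family_at_exists[OF sg hc \<open>\<delta>' > 0\<close> \<open>open_family A\<close>] by blast
  then show ?thesis using persist by (meson less_imp_le)
qed

lemma hc_family_on_interval_syndetic:
  assumes sg: "strongly_continuous_semigroup P" and rhc: "recurrent_hypercyclicity_criterion P"
    and "L \<ge> 0" "\<delta> > 0" "open_family A" "open_family B"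
  shows "\<exists>L'\<ge>0. \<forall>t\<ge>0. \<exists>s\<in>{t..t+L'}. \<forall>r\<in>{0..L}. hc_family_at P \<delta> A B (s + r)"
proof -
  obtain \<delta>' B' where "\<delta>' > 0" "open_family B'"
    and persist: "\<forall>t\<ge>0. hc_family_at P \<delta>' A B' t \<longrightarrow> (\<forall>r\<in>{0..L}. hc_family_at P \<delta> A B (t + r))"
    using hc_family_at_shift[OF sg recurrent_imp_hypercyclicity_criterion[OF rhc] assms(3,4,6)]
    by blast
  then obtain L' where "L' \<ge> 0" "\<forall>t\<ge>0. \<exists>s\<in>{t..t+L'}. hc_family_at P \<delta>' A B' s"
    using hc_family_at_syndetic[OF sg rhc \<open>\<delta>' > 0\<close> \<open>open_family A\<close>] by blast
  moreover have "s \<in> {t..t+L'} \<Longrightarrow> t \<ge> 0 \<Longrightarrow> s \<ge> 0" for s t by simp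
  ultimately show ?thesis using persist by meson
qed

section \<open>Tensor products\<close>

lemma tensor_completionD:
  assumes "tensor_completion tp"
  shows "linear (tp x)" "linear (\<lambda>x. tp x y)" "norm (tp x y) = norm x * norm y"
    and "closure (span (range (case_prod tp))) = UNIV"
  using assms unfolding tensor_completion_def by simp_all

lemma tensor_completion_bounded_bilinear:
  assumes "tensor_completion tp"
  shows "bounded_bilinear tp"
proof -
  note lin = tensor_completionD(1,2)[OF assms] and cross = tensor_completionD(3)[OF assms]
  show ?thesis
  proof
    show "tp (a + a') b = tp a b + tp a' b" "tp (r *\<^sub>R a) b = r *\<^sub>R tp a b" for a a' b r
      using linear_add[OF lin(2)[of b]] linear_scale[OF lin(2)[of b]] by simp_all
    show "tp a (b + b') = tp a b + tp a b'" "tp a (r *\<^sub>R b) = r *\<^sub>R tp a b" for a b b' r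
      using linear_add[OF lin(1)[of a]] linear_scale[OF lin(1)[of a]] by simp_all
    show "\<exists>K. \<forall>a b. norm (tp a b) \<le> norm a * norm b * K"
      using cross by (intro exI[of _ 1]) simp
  qed
qed

lemma tensor_completion_open_contains_tensor_sum:
  fixes tp :: "'x::banach \<Rightarrow> 'y::banach \<Rightarrow> 'z::banach"
  assumes tc: "tensor_completion tp" and "open U" "U \<noteq> {}"
  obtains I :: "('x \<times> 'y) set" and x y where "finite I" "(\<Sum>i\<in>I. tp (x i) (y i)) \<in> U"
proof -
  obtain u where "u \<in> U" "u \<in> span (range (case_prod tp))"
    using open_Int_closure_eq_empty[OF \<open>open U\<close>] tensor_completionD(4)[OF tc] \<open>U \<noteq> {}\<close> by blast
  then obtain A r where A: "finite A" "A \<subseteq> range (case_prod tp)" "u = (\<Sum>a\<in>A. r a *\<^sub>R a)"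
    unfolding span_explicit by blast
  then obtain Q where Q: "inj_on (case_prod tp) Q" "A = case_prod tp ` Q"
    using subset_image_inj by meson
  then have "finite Q" using A(1) finite_image_iff by blast
  have "u = (\<Sum>q\<in>Q. r (case_prod tp q) *\<^sub>R case_prod tp q)"
    unfolding A(3) Q(2) sum.reindex[OF Q(1)] by (simp add: comp_def)
  also have "\<dots> = (\<Sum>q\<in>Q. tp (r (case_prod tp q) *\<^sub>R fst q) (snd q))"
    using bounded_bilinear.scaleR_left[OF tensor_completion_bounded_bilinear[OF tc]]
    by (simp add: case_prod_beta)
  finally have "(\<Sum>q\<in>Q. tp (r (case_prod tp q) *\<^sub>R fst q) (snd q)) \<in> U" using \<open>u \<in> U\<close> by simp
  then show ?thesis by (rule that[OF \<open>finite Q\<close>])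
qed

lemma bounded_bilinear_continuous_at:
  assumes "bounded_bilinear tp" "\<epsilon> > 0"
  shows "\<exists>\<delta>>0. \<forall>a b. dist a x < \<delta> \<and> dist b y < \<delta> \<longrightarrow> dist (tp a b) (tp x y) < \<epsilon>"
proof -
  have "continuous (at (x, y)) (\<lambda>p. tp (fst p) (snd p))"
    by (intro bounded_bilinear.continuous[OF assms(1)] continuous_fst continuous_snd continuous_ident)
  then obtain \<delta> where "\<delta> > 0" and \<delta>: "\<forall>p. dist p (x, y) < \<delta> \<longrightarrow> dist (tp (fst p) (snd p)) (tp x y) < \<epsilon>"
    using \<open>\<epsilon> > 0\<close> unfolding continuous_at_eps_delta by fastforce
  have "dist (a, b) (x, y) < \<delta>" if "dist a x < \<delta> / 2" "dist b y < \<delta> / 2" for a b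
    using sqrt_sum_squares_le_sum[of "dist a x" "dist b y"] that by (simp add: dist_Pair_Pair)
  then show ?thesis using \<open>\<delta> > 0\<close> \<delta> by (intro exI[of _ "\<delta> / 2"]) force
qed

lemma bounded_bilinear_sum_continuous:
  assumes "bounded_bilinear tp" "finite I" "\<epsilon> > 0"
  shows "\<exists>\<delta>>0. \<forall>x' y'. (\<forall>i\<in>I. dist (x' i) (x i) < \<delta> \<and> dist (y' i) (y i) < \<delta>) \<longrightarrow>
    dist (\<Sum>i\<in>I. tp (x' i) (y' i)) (\<Sum>i\<in>I. tp (x i) (y i)) < \<epsilon>"
  using assms(2,3)
proof (induction I arbitrary: \<epsilon> rule: finite_induct)
  case empty
  then show ?case by (intro exI[of _ 1]) simp
next
  case (insert i I)
  obtain \<delta>1 where "\<delta>1 > 0" and \<delta>1: "\<forall>x' y'. (\<forall>i\<in>I. dist (x' i) (x i) < \<delta>1 \<and> dist (y' i) (y i) < \<delta>1)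
      \<longrightarrow> dist (\<Sum>i\<in>I. tp (x' i) (y' i)) (\<Sum>i\<in>I. tp (x i) (y i)) < \<epsilon> / 2"
    using insert.IH[of "\<epsilon> / 2"] insert.prems by auto
  obtain \<delta>2 where "\<delta>2 > 0" and \<delta>2: "\<forall>a b. dist a (x i) < \<delta>2 \<and> dist b (y i) < \<delta>2
      \<longrightarrow> dist (tp a b) (tp (x i) (y i)) < \<epsilon> / 2"
    using bounded_bilinear_continuous_at[OF assms(1) half_gt_zero[OF insert.prems]] by blast
  have "dist (\<Sum>i\<in>insert i I. tp (x' i) (y' i)) (\<Sum>i\<in>insert i I. tp (x i) (y i)) < \<epsilon>"
    if "\<forall>j\<in>insert i I. dist (x' j) (x j) < min \<delta>1 \<delta>2 \<and> dist (y' j) (y j) < min \<delta>1 \<delta>2" for x' y'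
    using that insert.hyps \<delta>1[rule_format, of x' y'] \<delta>2[rule_format, of "x' i" "y' i"]
      dist_triangle_add[of "tp (x' i) (y' i)" "\<Sum>i\<in>I. tp (x' i) (y' i)" "tp (x i) (y i)"
        "\<Sum>i\<in>I. tp (x i) (y i)"]
    by auto
  then show ?case using \<open>\<delta>1 > 0\<close> \<open>\<delta>2 > 0\<close> by (intro exI[of _ "min \<delta>1 \<delta>2"]) auto
qed

lemma bounded_bilinear_sum_stable_in_open:
  assumes "bounded_bilinear tp" "finite I" "open U" "(\<Sum>i\<in>I. tp (x i) (y i)) \<in> U"
  shows "\<exists>\<delta>>0. \<forall>x' y'. (\<forall>i\<in>I. x' i \<in> ball (x i) \<delta> \<and> y' i \<in> ball (y i) \<delta>) \<longrightarrow>
    (\<Sum>i\<in>I. tp (x' i) (y' i)) \<in> U"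
proof -
  obtain \<epsilon> where "\<epsilon> > 0" "ball (\<Sum>i\<in>I. tp (x i) (y i)) \<epsilon> \<subseteq> U" using assms(3,4) openE by blast
  then show ?thesis using bounded_bilinear_sum_continuous[OF assms(1,2) \<open>\<epsilon> > 0\<close>, of x y]
    by (auto simp: dist_commute subset_iff)
qed

lemma bounded_bilinear_sum_stable_near_and_near_zero:
  assumes bb: "bounded_bilinear tp" and "finite I" "open U" "(\<Sum>i\<in>I. tp (x i) (y i)) \<in> U"
    and "open W" "0 \<in> W"
  obtains \<delta> where "\<delta> > 0"
    and "\<And>x' y'. \<forall>i\<in>I. x' i \<in> ball (x i) \<delta> \<and> y' i \<in> ball (y i) \<delta> \<Longrightarrow>
      (\<Sum>i\<in>I. tp (x' i) (y' i)) \<in> U"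
    and "\<And>x' y'. \<forall>i\<in>I. norm (x' i) < \<delta> \<and> norm (y' i) < \<delta> \<Longrightarrow> (\<Sum>i\<in>I. tp (x' i) (y' i)) \<in> W"
proof -
  have zero_in_W: "(\<Sum>i\<in>I. tp 0 0) \<in> W" using \<open>0 \<in> W\<close> by (simp add: bounded_bilinear.zero_left[OF bb])
  obtain \<delta>W where "\<delta>W > 0" and near_zero: "\<forall>x' y'. (\<forall>i\<in>I. x' i \<in> ball 0 \<delta>W \<and>
      y' i \<in> ball 0 \<delta>W) \<longrightarrow> (\<Sum>i\<in>I. tp (x' i) (y' i)) \<in> W"
    using bounded_bilinear_sum_stable_in_open[OF bb \<open>finite I\<close> \<open>open W\<close> zero_in_W] by blast
  obtain \<delta>U where "\<delta>U > 0" and near: "\<forall>x' y'. (\<forall>i\<in>I. x' i \<in> ball (x i) \<delta>U \<and>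
      y' i \<in> ball (y i) \<delta>U) \<longrightarrow> (\<Sum>i\<in>I. tp (x' i) (y' i)) \<in> U"
    using bounded_bilinear_sum_stable_in_open[OF bb assms(2-4)] by blast
  show ?thesis
  proof (rule that[of "min \<delta>U \<delta>W"])
    show "min \<delta>U \<delta>W > 0" using \<open>\<delta>U > 0\<close> \<open>\<delta>W > 0\<close> by simp
  qed (use near near_zero in auto)
qed

lemma hc_family_at_balls:
  assumes "hc_family_at P \<delta> ((\<lambda>i. ball (x i) \<delta>) ` I) ((\<lambda>j. ball (a j) \<delta>) ` J) s"
  obtains x' a' where "\<forall>i\<in>I. x' i \<in> ball (x i) \<delta> \<and> norm (P s (x' i)) < \<delta>"
    and "\<forall>j\<in>J. norm (a' j) < \<delta> \<and> P s (a' j) \<in> ball (a j) \<delta>"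
proof -
  have "\<forall>i\<in>I. \<exists>x'. x' \<in> ball (x i) \<delta> \<and> norm (P s x') < \<delta>"
    "\<forall>j\<in>J. \<exists>a'. norm a' < \<delta> \<and> P s a' \<in> ball (a j) \<delta>"
    using assms unfolding hc_family_at_def by blast+
  then show ?thesis using that by metis
qed

lemma hc_at_tensor_from_factors:
  fixes T :: "real \<Rightarrow> 'x::banach \<Rightarrow> 'x" and S :: "real \<Rightarrow> 'y::banach \<Rightarrow> 'y"
    and tp :: "'x \<Rightarrow> 'y \<Rightarrow> 'z::banach" and R :: "real \<Rightarrow> 'z \<Rightarrow> 'z"
  assumes tc: "tensor_completion tp" and R_linear: "\<forall>t\<ge>0. bounded_linear (R t)"
    and R_tensor: "\<forall>t\<ge>0. \<forall>x y. R t (tp x y) = tp (T t x) (S t y)"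
    and "open U" "U \<noteq> {}" "open V" "V \<noteq> {}" "open W" "0 \<in> W"
  obtains \<delta> AT BT AS BS where "\<delta> > 0" "open_family AT" "open_family BT" "open_family AS"
    "open_family BS" "\<And>s. s \<ge> 0 \<Longrightarrow> hc_family_at T \<delta> AT BT s \<Longrightarrow> hc_family_at S \<delta> AS BS s \<Longrightarrow>
      hc_at R U V W s"
proof -
  note bb = tensor_completion_bounded_bilinear[OF tc]
  obtain I :: "('x \<times> 'y) set" and x y where I: "finite I" "(\<Sum>i\<in>I. tp (x i) (y i)) \<in> U"
    by (rule tensor_completion_open_contains_tensor_sum[OF tc \<open>open U\<close> \<open>U \<noteq> {}\<close>])
  obtain J :: "('x \<times> 'y) set" and a b where J: "finite J" "(\<Sum>j\<in>J. tp (a j) (b j)) \<in> V"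
    by (rule tensor_completion_open_contains_tensor_sum[OF tc \<open>open V\<close> \<open>V \<noteq> {}\<close>])
  obtain \<delta>I where "\<delta>I > 0"
    and near_I: "\<And>x' y'. \<forall>i\<in>I. x' i \<in> ball (x i) \<delta>I \<and> y' i \<in> ball (y i) \<delta>I \<Longrightarrow>
      (\<Sum>i\<in>I. tp (x' i) (y' i)) \<in> U"
    and small_I: "\<And>x' y'. \<forall>i\<in>I. norm (x' i) < \<delta>I \<and> norm (y' i) < \<delta>I \<Longrightarrow>
      (\<Sum>i\<in>I. tp (x' i) (y' i)) \<in> W"
    using bounded_bilinear_sum_stable_near_and_near_zero[OF bb I(1) \<open>open U\<close> I(2) \<open>open W\<close> \<open>0 \<in> W\<close>] by blast
  obtain \<delta>J where "\<delta>J > 0"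
    and near_J: "\<And>a' b'. \<forall>j\<in>J. a' j \<in> ball (a j) \<delta>J \<and> b' j \<in> ball (b j) \<delta>J \<Longrightarrow>
      (\<Sum>j\<in>J. tp (a' j) (b' j)) \<in> V"
    and small_J: "\<And>a' b'. \<forall>j\<in>J. norm (a' j) < \<delta>J \<and> norm (b' j) < \<delta>J \<Longrightarrow>
      (\<Sum>j\<in>J. tp (a' j) (b' j)) \<in> W"
    using bounded_bilinear_sum_stable_near_and_near_zero[OF bb J(1) \<open>open V\<close> J(2) \<open>open W\<close> \<open>0 \<in> W\<close>] by blast
  define \<delta> where "\<delta> = min \<delta>I \<delta>J"
  have "\<delta> > 0" using \<open>\<delta>I > 0\<close> \<open>\<delta>J > 0\<close> by (simp add: \<delta>_def)
  define AT where "AT = (\<lambda>i. ball (x i) \<delta>) ` I"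
  define AS where "AS = (\<lambda>i. ball (y i) \<delta>) ` I"
  define BT where "BT = (\<lambda>j. ball (a j) \<delta>) ` J"
  define BS where "BS = (\<lambda>j. ball (b j) \<delta>) ` J"
  have "open_family AT" "open_family AS" "open_family BT" "open_family BS"
    using I(1) J(1) \<open>\<delta> > 0\<close> by (auto simp: open_family_def AT_def AS_def BT_def BS_def)
  moreover have "hc_at R U V W s"
    if "s \<ge> 0" and T_hit: "hc_family_at T \<delta> AT BT s" and S_hit: "hc_family_at S \<delta> AS BS s" for s
  proof -
    obtain x' a' where x': "\<forall>i\<in>I. x' i \<in> ball (x i) \<delta> \<and> norm (T s (x' i)) < \<delta>"
      and a': "\<forall>j\<in>J. norm (a' j) < \<delta> \<and> T s (a' j) \<in> ball (a j) \<delta>"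
      using hc_family_at_balls T_hit unfolding AT_def BT_def by blast
    obtain y' b' where y': "\<forall>i\<in>I. y' i \<in> ball (y i) \<delta> \<and> norm (S s (y' i)) < \<delta>"
      and b': "\<forall>j\<in>J. norm (b' j) < \<delta> \<and> S s (b' j) \<in> ball (b j) \<delta>"
      using hc_family_at_balls S_hit unfolding AS_def BS_def by blast
    have R_sum: "R s (\<Sum>i\<in>K. tp (p i) (q i)) = (\<Sum>i\<in>K. tp (T s (p i)) (S s (q i)))"
      for K :: "('x \<times> 'y) set" and p q
      using R_linear R_tensor \<open>s \<ge> 0\<close> by (simp add: linear_sum bounded_linear.linear)
    have "(\<Sum>i\<in>I. tp (x' i) (y' i)) \<in> U" "R s (\<Sum>i\<in>I. tp (x' i) (y' i)) \<in> W"
      using near_I small_I x' y' unfolding R_sum \<delta>_def by auto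
    moreover have "(\<Sum>j\<in>J. tp (a' j) (b' j)) \<in> W" "R s (\<Sum>j\<in>J. tp (a' j) (b' j)) \<in> V"
      using near_J small_J a' b' unfolding R_sum \<delta>_def by auto
    ultimately show ?thesis unfolding hc_at_def by blast
  qed
  ultimately show ?thesis using that \<open>\<delta> > 0\<close> by blast
qed

lemma syndetic_meets_interval:
  fixes L :: real
  assumes "\<forall>t\<ge>0. \<exists>s\<in>{t..t+L}. Q s" "t0 \<ge> 0" "\<forall>r\<in>{0..L}. Q' (t0 + r)"
  shows "\<exists>s\<in>{t0..t0+L}. Q s \<and> Q' s"
proof -
  obtain s where "s \<in> {t0..t0+L}" "Q s" using assms(1,2) by blast
  moreover have "s - t0 \<in> {0..L}" using \<open>s \<in> {t0..t0+L}\<close> by simp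
  then have "Q' (t0 + (s - t0))" using assms(3) by blast
  ultimately show ?thesis by auto
qed

lemma tensor_hypercyclicity_criterion:
  fixes T :: "real \<Rightarrow> 'x::banach \<Rightarrow> 'x" and S :: "real \<Rightarrow> 'y::banach \<Rightarrow> 'y"
    and tp :: "'x \<Rightarrow> 'y \<Rightarrow> 'z::banach" and R :: "real \<Rightarrow> 'z \<Rightarrow> 'z"
  assumes "strongly_continuous_semigroup T" "strongly_continuous_semigroup S"
    and "recurrent_hypercyclicity_criterion T" "tensor_completion tp"
    and "\<forall>t\<ge>0. bounded_linear (R t)" "\<forall>t\<ge>0. \<forall>x y. R t (tp x y) = tp (T t x) (S t y)"
    and "hypercyclicity_criterion S"
  shows "hypercyclicity_criterion R"
  unfolding hypercyclicity_criterion_def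
proof (intro allI impI)
  fix U V W :: "'z set"
  assume "open U \<and> U \<noteq> {} \<and> open V \<and> V \<noteq> {} \<and> open W \<and> 0 \<in> W"
  then obtain \<delta> AT BT AS BS where "\<delta> > 0" "open_family AT" "open_family BT" "open_family AS"
    "open_family BS" and factors: "\<And>s. s \<ge> 0 \<Longrightarrow> hc_family_at T \<delta> AT BT s \<Longrightarrow>
      hc_family_at S \<delta> AS BS s \<Longrightarrow> hc_at R U V W s"
    using hc_at_tensor_from_factors[OF assms(4-6)] by blast
  obtain LT where T_good: "\<forall>t\<ge>0. \<exists>s\<in>{t..t+LT}. hc_family_at T \<delta> AT BT s" and "LT \<ge> 0"
    using hc_family_at_syndetic[OF assms(1,3) \<open>\<delta> > 0\<close> \<open>open_family AT\<close> \<open>open_family BT\<close>] by blast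
  obtain s0 where "s0 > 0" and S_good: "\<forall>r\<in>{0..LT}. hc_family_at S \<delta> AS BS (s0 + r)"
    using hc_family_on_interval[OF assms(2,7) \<open>LT \<ge> 0\<close> \<open>\<delta> > 0\<close> \<open>open_family AS\<close> \<open>open_family BS\<close>]
    by blast
  obtain s where "s \<in> {s0..s0+LT}" "hc_family_at T \<delta> AT BT s" "hc_family_at S \<delta> AS BS s"
    using syndetic_meets_interval[OF T_good _ S_good] \<open>s0 > 0\<close> by auto
  moreover have "s > 0" using \<open>s \<in> {s0..s0+LT}\<close> \<open>s0 > 0\<close> by simp
  ultimately show "\<exists>t>0. R t ` U \<inter> W \<noteq> {} \<and> R t ` W \<inter> V \<noteq> {}"
    using factors unfolding hc_at_def by auto
qed

lemma tensor_recurrent_hypercyclicity_criterion: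
  fixes T :: "real \<Rightarrow> 'x::banach \<Rightarrow> 'x" and S :: "real \<Rightarrow> 'y::banach \<Rightarrow> 'y"
    and tp :: "'x \<Rightarrow> 'y \<Rightarrow> 'z::banach" and R :: "real \<Rightarrow> 'z \<Rightarrow> 'z"
  assumes "strongly_continuous_semigroup T" "strongly_continuous_semigroup S"
    and "recurrent_hypercyclicity_criterion T" "tensor_completion tp"
    and "\<forall>t\<ge>0. bounded_linear (R t)" "\<forall>t\<ge>0. \<forall>x y. R t (tp x y) = tp (T t x) (S t y)"
    and "recurrent_hypercyclicity_criterion S"
  shows "recurrent_hypercyclicity_criterion R"
  unfolding recurrent_hypercyclicity_criterion_def
proof (intro allI impI)
  fix U V W :: "'z set"
  assume "open U \<and> U \<noteq> {} \<and> open V \<and> V \<noteq> {} \<and> open W \<and> 0 \<in> W"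
  then obtain \<delta> AT BT AS BS where "\<delta> > 0" "open_family AT" "open_family BT" "open_family AS"
    "open_family BS" and factors: "\<And>s. s \<ge> 0 \<Longrightarrow> hc_family_at T \<delta> AT BT s \<Longrightarrow>
      hc_family_at S \<delta> AS BS s \<Longrightarrow> hc_at R U V W s"
    using hc_at_tensor_from_factors[OF assms(4-6)] by blast
  obtain LT where T_good: "\<forall>t\<ge>0. \<exists>s\<in>{t..t+LT}. hc_family_at T \<delta> AT BT s" and "LT \<ge> 0"
    using hc_family_at_syndetic[OF assms(1,3) \<open>\<delta> > 0\<close> \<open>open_family AT\<close> \<open>open_family BT\<close>] by blast
  obtain LS where "LS \<ge> 0"
    and S_good: "\<forall>t\<ge>0. \<exists>s0\<in>{t..t+LS}. \<forall>r\<in>{0..LT}. hc_family_at S \<delta> AS BS (s0 + r)"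
    using hc_family_on_interval_syndetic[OF assms(2,7) \<open>LT \<ge> 0\<close> \<open>\<delta> > 0\<close> \<open>open_family AS\<close>
        \<open>open_family BS\<close>] by blast
  have "\<exists>s\<in>{t..t + (LS + LT)}. hc_at R U V W s" if "t \<ge> 0" for t
  proof -
    obtain s0 where s0: "s0 \<in> {t..t+LS}" and S_interval: "\<forall>r\<in>{0..LT}. hc_family_at S \<delta> AS BS (s0 + r)"
      using S_good \<open>t \<ge> 0\<close> by blast
    then have "s0 \<ge> 0" using \<open>t \<ge> 0\<close> by simp
    then obtain s where s: "s \<in> {s0..s0+LT}" "hc_family_at T \<delta> AT BT s" "hc_family_at S \<delta> AS BS s"
      using syndetic_meets_interval[OF T_good _ S_interval] by blast
    then have "s \<in> {t..t + (LS + LT)}" "s \<ge> 0" using s0 \<open>s0 \<ge> 0\<close> by auto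
    then show ?thesis using factors s(2,3) by blast
  qed
  then show "\<exists>L\<ge>0. \<forall>t\<ge>0. \<exists>s\<in>{t..t+L}. R s ` U \<inter> W \<noteq> {} \<and> R s ` W \<inter> V \<noteq> {}"
    using \<open>LS \<ge> 0\<close> \<open>LT \<ge> 0\<close> unfolding hc_at_def by (intro exI[of _ "LS + LT"]) auto
qed

theorem theorem2p1:
  fixes T :: "real \<Rightarrow> 'x::banach \<Rightarrow> 'x"
    and S :: "real \<Rightarrow> 'y::banach \<Rightarrow> 'y"
    and tp :: "'x \<Rightarrow> 'y \<Rightarrow> 'z::banach"
    and R :: "real \<Rightarrow> 'z \<Rightarrow> 'z"
  assumes "strongly_continuous_semigroup T"
    and "strongly_continuous_semigroup S"
    and "recurrent_hypercyclicity_criterion T"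
    and "tensor_completion tp"
    and "\<forall>t\<ge>0. bounded_linear (R t)"
    and "\<forall>t\<ge>0. \<forall>x y. R t (tp x y) = tp (T t x) (S t y)"
  shows "(hypercyclicity_criterion S \<longrightarrow> hypercyclicity_criterion R) \<and>
         (recurrent_hypercyclicity_criterion S \<longrightarrow> recurrent_hypercyclicity_criterion R)"
  using tensor_hypercyclicity_criterion[OF assms] tensor_recurrent_hypercyclicity_criterion[OF assms]
  by blast

end
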